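(* Let $G$ be a graph with chromatic number $\chi(G)$, and suppose $G$ has a proper coloring with $\chi(G)$ color classes $V_1,\ldots,V_{\chi(G)}$, where $V_i=\{v_{i,1},v_{i,2},\ldots,v_{i,n(i)}\}$, such that for each vertex $v_{i,j}$ there is a subset $X_{i,j}\subseteq V(G)\setminus V_i$ with $N_G(v_{i,j})\subseteq X_{i,j}$, satisfying: (i) for each $i$ there is $k(i)\in\{1,\ldots,n(i)\}$ with $X_{i,1}\supseteq X_{i,2}\supseteq\cdots\supseteq X_{i,k(i)}$ and $X_{i,k(i)+1}\subseteq X_{i,k(i)+2}\subseteq\cdots\subseteq X_{i,n(i)}$ (when $k(i)=n(i)$ only the first chain is required); (ii) for any two distinct nonadjacent vertices $v_{i,s}$ and $v_{j,t}$ of $G$, either $v_{i,s}\notin X_{j,t}$ or $v_{j,t}\notin X_{i,s}$. Then $\operatorname{box}(G)\le\chi(G)$.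
   Context: All graphs are finite, simple and undirected. $N_G(v)$ is the set of neighbors of $v$ in $G$. A box in $\mathbb{R}^k$ is a Cartesian product of $k$ closed intervals of the real line. The boxicity $\operatorname{box}(G)$ of a graph $G$ is the minimum nonnegative integer $k$ such that $G$ is isomorphic to the intersection graph of a family of boxes in $\mathbb{R}^k$. $\chi(G)$ is the chromatic number of $G$; a proper coloring with $k$ colors partitions $V(G)$ into $k$ independent sets called color classes. *)

theory Defs
  imports Complex_Main
begin

definition graph :: "'a set \<Rightarrow> ('a \<Rightarrow> 'a \<Rightarrow> bool) \<Rightarrow> bool" where
  "graph V E \<longleftrightarrow> finite V \<and> (\<forall>u v. E u v \<longrightarrow> u \<in> V \<and> v \<in> V \<and> u \<noteq> v \<and> E v u)"

definition nbhd :: "'a set \<Rightarrow> ('a \<Rightarrow> 'a \<Rightarrow> bool) \<Rightarrow> 'a \<Rightarrow> 'a set" where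
  "nbhd V E v = {u \<in> V. E v u}"

definition proper_coloring :: "'a set \<Rightarrow> ('a \<Rightarrow> 'a \<Rightarrow> bool) \<Rightarrow> ('a \<Rightarrow> nat) \<Rightarrow> nat \<Rightarrow> bool" where
  "proper_coloring V E c k \<longleftrightarrow> (\<forall>v\<in>V. c v < k) \<and> (\<forall>u\<in>V. \<forall>v\<in>V. E u v \<longrightarrow> c u \<noteq> c v)"

definition chromatic_number :: "'a set \<Rightarrow> ('a \<Rightarrow> 'a \<Rightarrow> bool) \<Rightarrow> nat" where
  "chromatic_number V E = (LEAST k. \<exists>c. proper_coloring V E c k)"

text \<open>A box representation in R^k: vertex v gets the box
  \<Prod>_{i<k} [l v i, r v i]; G is isomorphic (via v \<mapsto> its box) to the
  intersection graph of the family of boxes.\<close>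
definition box_rep :: "'a set \<Rightarrow> ('a \<Rightarrow> 'a \<Rightarrow> bool) \<Rightarrow> nat \<Rightarrow> ('a \<Rightarrow> nat \<Rightarrow> real) \<Rightarrow> ('a \<Rightarrow> nat \<Rightarrow> real) \<Rightarrow> bool" where
  "box_rep V E k l r \<longleftrightarrow>
     (\<forall>v\<in>V. \<forall>i<k. l v i \<le> r v i) \<and>
     (\<forall>u\<in>V. \<forall>v\<in>V. u \<noteq> v \<longrightarrow>
        (E u v \<longleftrightarrow> (\<forall>i<k. max (l u i) (l v i) \<le> min (r u i) (r v i))))"

definition boxicity :: "'a set \<Rightarrow> ('a \<Rightarrow> 'a \<Rightarrow> bool) \<Rightarrow> nat" where
  "boxicity V E = (LEAST k. \<exists>l r. box_rep V E k l r)"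

end

theory Submission
  imports Defs
begin

text \<open>Use one coordinate per colour class. In coordinate \<open>i\<close> the vertices of \<open>V\<^sub>i\<close> become
  distinct points of the real line, placed so that the sets \<open>X\<close> grow towards the origin: the
  decreasing chain at \<open>-1, -2, \<dots>\<close> and the increasing chain at \<open>\<dots>, 2, 1\<close>. Every other
  vertex \<open>w\<close> becomes the smallest interval containing \<open>0\<close> and the points \<open>x\<close> with
  \<open>w \<in> X x\<close>; by this monotonicity it contains exactly the points \<open>u\<close> with \<open>w \<in> X u\<close>.
  Two vertices of the same class are separated in their own coordinate; adjacent vertices
  meet everywhere since \<open>N(v) \<subseteq> X v\<close>; nonadjacent vertices of different classes are
  separated in one of their two coordinates by condition (ii).\<close>

definition centred_positions :: "'a set \<Rightarrow> ('a \<Rightarrow> real) \<Rightarrow> ('a \<Rightarrow> 'b set) \<Rightarrow> bool" where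
  "centred_positions C p X \<longleftrightarrow> inj_on p C \<and> (\<forall>v\<in>C. p v \<noteq> 0) \<and>
     (\<forall>x\<in>C. \<forall>u\<in>C. p x \<le> p u \<and> p u \<le> 0 \<or> 0 \<le> p u \<and> p u \<le> p x \<longrightarrow> X x \<subseteq> X u)"

lemma centred_positions_hull_iff:
  fixes w :: 'b
  assumes centred: "centred_positions C p X" and "finite C" "u \<in> C"
  defines "S \<equiv> insert 0 (p ` {x \<in> C. w \<in> X x})"
  shows "Min S \<le> p u \<and> p u \<le> Max S \<longleftrightarrow> w \<in> X u"
proof
  have S: "finite S" "S \<noteq> {}" using \<open>finite C\<close> by (auto simp: S_def)
  assume hull: "Min S \<le> p u \<and> p u \<le> Max S"
  have "p u \<noteq> 0" using centred \<open>u \<in> C\<close> by (simp add: centred_positions_def)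
  then consider "p u < 0" | "0 < p u" by linarith
  then obtain x where x: "x \<in> C" "w \<in> X x"
    and between: "p x \<le> p u \<and> p u \<le> 0 \<or> 0 \<le> p u \<and> p u \<le> p x"
  proof cases
    case 1
    then have "Min S \<noteq> 0" using hull by auto
    then have "Min S \<in> p ` {x \<in> C. w \<in> X x}" using Min_in[OF S] by (auto simp: S_def)
    with that 1 hull show thesis by force
  next
    case 2
    then have "Max S \<noteq> 0" using hull by auto
    then have "Max S \<in> p ` {x \<in> C. w \<in> X x}" using Max_in[OF S] by (auto simp: S_def)
    with that 2 hull show thesis by force
  qed
  then have "X x \<subseteq> X u"
    using centred x(1) \<open>u \<in> C\<close> unfolding centred_positions_def by blast
  then show "w \<in> X u" using x by blast
next
  assume "w \<in> X u"
  then have "p u \<in> S" using \<open>u \<in> C\<close> by (simp add: S_def)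
  then show "Min S \<le> p u \<and> p u \<le> Max S" using \<open>finite C\<close> by (simp add: S_def)
qed

definition class_interval_lo ::
    "'a set \<Rightarrow> ('a \<Rightarrow> nat) \<Rightarrow> (nat \<Rightarrow> 'a \<Rightarrow> real) \<Rightarrow> ('a \<Rightarrow> 'a set) \<Rightarrow> 'a \<Rightarrow> nat \<Rightarrow> real" where
  "class_interval_lo V c p X v i =
     (if c v = i then p i v else Min (insert 0 (p i ` {x \<in> {x \<in> V. c x = i}. v \<in> X x})))"

definition class_interval_hi ::
    "'a set \<Rightarrow> ('a \<Rightarrow> nat) \<Rightarrow> (nat \<Rightarrow> 'a \<Rightarrow> real) \<Rightarrow> ('a \<Rightarrow> 'a set) \<Rightarrow> 'a \<Rightarrow> nat \<Rightarrow> real" where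
  "class_interval_hi V c p X v i =
     (if c v = i then p i v else Max (insert 0 (p i ` {x \<in> {x \<in> V. c x = i}. v \<in> X x})))"

lemma class_interval_outside_class:
  assumes "finite V" "c v \<noteq> i"
  shows "class_interval_lo V c p X v i \<le> 0" "0 \<le> class_interval_hi V c p X v i"
  using assms by (simp_all add: class_interval_lo_def class_interval_hi_def)

lemma class_interval_lo_le_hi:
  assumes "finite V"
  shows "class_interval_lo V c p X v i \<le> class_interval_hi V c p X v i"
  using class_interval_outside_class[OF assms, of c v i p X]
  by (cases "c v = i") (simp_all add: class_interval_lo_def class_interval_hi_def)

lemma class_intervals_meet_iff:
  assumes "centred_positions {x \<in> V. c x = i} (p i) X" "finite V" "u \<in> V" "c u = i" "c v \<noteq> i"
  shows "max (class_interval_lo V c p X u i) (class_interval_lo V c p X v i)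
           \<le> min (class_interval_hi V c p X u i) (class_interval_hi V c p X v i) \<longleftrightarrow> v \<in> X u"
proof -
  have "class_interval_lo V c p X v i \<le> class_interval_hi V c p X v i"
    using assms(2) by (rule class_interval_lo_le_hi)
  then show ?thesis
    using centred_positions_hull_iff[OF assms(1), of u v] assms(2-5)
    by (auto simp: class_interval_lo_def class_interval_hi_def)
qed

lemma box_rep_of_centred_positions:
  assumes G: "graph V E" and col: "proper_coloring V E c k"
    and Nsub: "\<forall>v\<in>V. nbhd V E v \<subseteq> X v"
    and cond2: "\<forall>u\<in>V. \<forall>w\<in>V. u \<noteq> w \<and> \<not> E u w \<longrightarrow> u \<notin> X w \<or> w \<notin> X u"
    and centred: "\<forall>i<k. centred_positions {v \<in> V. c v = i} (p i) X"
  shows "box_rep V E k (class_interval_lo V c p X) (class_interval_hi V c p X)"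
proof -
  let ?l = "class_interval_lo V c p X" and ?r = "class_interval_hi V c p X"
  let ?meet = "\<lambda>u v i. max (?l u i) (?l v i) \<le> min (?r u i) (?r v i)"
  have fin: "finite V" using G by (simp add: graph_def)
  have ck: "c v < k" if "v \<in> V" for v using col that by (simp add: proper_coloring_def)
  have meet_own_class: "?meet u v (c u) \<longleftrightarrow> v \<in> X u" if "u \<in> V" "c v \<noteq> c u" for u v
    using class_intervals_meet_iff[OF _ fin that(1) refl that(2)] centred ck[OF that(1)] by blast
  have meet_sym: "?meet u v i \<longleftrightarrow> ?meet v u i" for u v i
    by (simp add: max.commute min.commute)
  have "E u v \<longleftrightarrow> (\<forall>i<k. ?meet u v i)" if uv: "u \<in> V" "v \<in> V" "u \<noteq> v" for u v
  proof
    assume "E u v"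
    then have "v \<in> X u" "u \<in> X v" "c u \<noteq> c v"
      using G Nsub col uv by (auto simp: graph_def nbhd_def proper_coloring_def)
    moreover have "?meet u v i" if "c u \<noteq> i" "c v \<noteq> i" for i
      using class_interval_outside_class[OF fin, of c u i p X]
        class_interval_outside_class[OF fin, of c v i p X] that by auto
    ultimately show "\<forall>i<k. ?meet u v i"
      using meet_own_class[OF uv(1)] meet_own_class[OF uv(2)] meet_sym by metis
  next
    assume meet: "\<forall>i<k. ?meet u v i"
    show "E u v"
    proof (rule ccontr)
      assume "\<not> E u v"
      show False
      proof (cases "c u = c v")
        case True
        have "inj_on (p (c u)) {x \<in> V. c x = c u}"
          using centred ck[OF uv(1)] by (simp add: centred_positions_def)
        then have "p (c u) u \<noteq> p (c u) v" using uv True by (auto dest: inj_onD)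
        then show False using meet ck[OF uv(1)] True
          by (auto simp: class_interval_lo_def class_interval_hi_def)
      next
        case False
        then show False
          using cond2 uv \<open>\<not> E u v\<close> meet ck meet_own_class[OF uv(1)] meet_own_class[OF uv(2)] meet_sym
          by metis
      qed
    qed
  qed
  then show ?thesis
    using class_interval_lo_le_hi[OF fin] by (simp add: box_rep_def)
qed

definition chain_position :: "nat \<Rightarrow> nat \<Rightarrow> nat \<Rightarrow> real" where
  "chain_position n k a = (if a < k then - real (Suc a) else real n - real a)"

lemma chain_position_nonzero: "a < n \<Longrightarrow> chain_position n k a \<noteq> 0"
  by (simp add: chain_position_def)

lemma inj_on_chain_position: "inj_on (chain_position n k) {..<n}"
  by (rule inj_onI) (simp add: chain_position_def split: if_splits)

lemma chain_position_centred:
  assumes dec: "\<forall>a b. a \<le> b \<and> b < k \<longrightarrow> f b \<subseteq> f a"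
    and inc: "\<forall>a b. k \<le> a \<and> a \<le> b \<and> b < n \<longrightarrow> f a \<subseteq> f b"
    and "a < n" "b < n"
    and between: "chain_position n k a \<le> chain_position n k b \<and> chain_position n k b \<le> 0 \<or>
                  0 \<le> chain_position n k b \<and> chain_position n k b \<le> chain_position n k a"
  shows "f a \<subseteq> f b"
  using between
proof
  assume "chain_position n k a \<le> chain_position n k b \<and> chain_position n k b \<le> 0"
  then have "b \<le> a \<and> a < k" using \<open>a < n\<close> \<open>b < n\<close> by (simp add: chain_position_def split: if_splits)
  then show ?thesis using dec by blast
next
  assume "0 \<le> chain_position n k b \<and> chain_position n k b \<le> chain_position n k a"
  then have "k \<le> a \<and> a \<le> b" using \<open>a < n\<close> \<open>b < n\<close> by (simp add: chain_position_def split: if_splits)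
  then show ?thesis using inc \<open>b < n\<close> by blast
qed

lemma centred_positions_of_chains:
  assumes "distinct xs"
    and dec: "\<forall>a b. a \<le> b \<and> b < k \<longrightarrow> X (xs ! b) \<subseteq> X (xs ! a)"
    and inc: "\<forall>a b. k \<le> a \<and> a \<le> b \<and> b < length xs \<longrightarrow> X (xs ! a) \<subseteq> X (xs ! b)"
  shows "centred_positions (set xs)
           (chain_position (length xs) k \<circ> the_inv_into {..<length xs} ((!) xs)) X"
proof -
  let ?idx = "the_inv_into {..<length xs} ((!) xs)"
  have bij: "bij_betw ?idx (set xs) {..<length xs}"
    using bij_betw_the_inv_into[OF bij_betw_nth[OF \<open>distinct xs\<close> refl refl]] .
  then have idx: "?idx v < length xs" "xs ! ?idx v = v" if "v \<in> set xs" for v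
    using that bij_betw_nth[OF \<open>distinct xs\<close> refl refl]
    by (auto simp: bij_betw_def f_the_inv_into_f)
  have "inj_on (chain_position (length xs) k \<circ> ?idx) (set xs)"
    using bij inj_on_chain_position by (auto simp: bij_betw_def intro: comp_inj_on)
  moreover have "X x \<subseteq> X u"
    if "x \<in> set xs" "u \<in> set xs"
      "chain_position (length xs) k (?idx x) \<le> chain_position (length xs) k (?idx u) \<and>
       chain_position (length xs) k (?idx u) \<le> 0 \<or>
       0 \<le> chain_position (length xs) k (?idx u) \<and>
       chain_position (length xs) k (?idx u) \<le> chain_position (length xs) k (?idx x)" for x u
    using chain_position_centred[of k "\<lambda>a. X (xs ! a)", OF dec inc idx(1)[OF that(1)]
        idx(1)[OF that(2)] that(3)] idx that(1,2)
    by simp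
  ultimately show ?thesis
    using idx(1) chain_position_nonzero by (auto simp: centred_positions_def)
qed

theorem theorem3p1:
  fixes V :: "'a set" and E :: "'a \<Rightarrow> 'a \<Rightarrow> bool"
    and c :: "'a \<Rightarrow> nat" and ord :: "nat \<Rightarrow> 'a list" and X :: "'a \<Rightarrow> 'a set"
  assumes G: "graph V E"
    and col: "proper_coloring V E c (chromatic_number V E)"
    and ord: "\<forall>i < chromatic_number V E. distinct (ord i) \<and> set (ord i) = {v \<in> V. c v = i}"
    and Xsub: "\<forall>v\<in>V. X v \<subseteq> V - {u \<in> V. c u = c v}"
    and Nsub: "\<forall>v\<in>V. nbhd V E v \<subseteq> X v"
    and chains: "\<forall>i < chromatic_number V E. \<exists>k. 1 \<le> k \<and> k \<le> length (ord i) \<and>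
        (\<forall>a b. a \<le> b \<and> b < k \<longrightarrow> X (ord i ! b) \<subseteq> X (ord i ! a)) \<and>
        (\<forall>a b. k \<le> a \<and> a \<le> b \<and> b < length (ord i) \<longrightarrow> X (ord i ! a) \<subseteq> X (ord i ! b))"
    and cond2: "\<forall>u\<in>V. \<forall>w\<in>V. u \<noteq> w \<and> \<not> E u w \<longrightarrow> u \<notin> X w \<or> w \<notin> X u"
  shows "boxicity V E \<le> chromatic_number V E"
proof -
  let ?n = "chromatic_number V E"
  obtain K where K: "\<forall>i < ?n.
        (\<forall>a b. a \<le> b \<and> b < K i \<longrightarrow> X (ord i ! b) \<subseteq> X (ord i ! a)) \<and>
        (\<forall>a b. K i \<le> a \<and> a \<le> b \<and> b < length (ord i) \<longrightarrow> X (ord i ! a) \<subseteq> X (ord i ! b))"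
    using chains unfolding choice_iff' by metis
  define p where "p i = chain_position (length (ord i)) (K i) \<circ>
                          the_inv_into {..<length (ord i)} ((!) (ord i))" for i
  have "\<forall>i < ?n. centred_positions {v \<in> V. c v = i} (p i) X"
    using centred_positions_of_chains ord K unfolding p_def by (metis (no_types, lifting))
  then have "box_rep V E ?n (class_interval_lo V c p X) (class_interval_hi V c p X)"
    using box_rep_of_centred_positions[OF G col Nsub cond2] by blast
  then show ?thesis
    unfolding boxicity_def by (blast intro: Least_le)
qed

end
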